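(* Let $s_X\colon X\to P$ and $s_Y\colon Y\to Q$ be stratified topological spaces such that the simplicial set $\mathrm{Exit}_P(X)$ is an $\infty$-category (i.e. a quasi-category). Assume we are given a stratified embedding $Y\hookrightarrow X$ which is a consecutive inclusion of strata: $Q\subseteq P$ is a consecutive (convex) subposet, i.e. if $a\le b\le c$ in $P$ with $a,c\in Q$ then $b\in Q$, and $Y=s_X^{-1}(Q)$ with $s_Y$ the restriction of $s_X$. Then $\mathrm{Exit}_Q(Y)$ is an $\infty$-category and the induced functor $\mathrm{Exit}_Q(Y)\to\mathrm{Exit}_P(X)$ is fully faithful.
   Context: A stratified space is a continuous map $s\colon X\to P$ where the poset $P$ carries the Alexandroff topology (upward closed sets are open). For such, the exit-path simplicial set $\mathrm{Exit}_P(X)$ is defined as the pullback of simplicial sets $N(P)\times_{\mathrm{Sing}(P)}\mathrm{Sing}(X)$, where $N(P)$ is the nerve of $P$, $\mathrm{Sing}$ is the singular simplicial set functor, $N(P)\to\mathrm{Sing}(P)$ is the canonical map and $\mathrm{Sing}(X)\to\mathrm{Sing}(P)$ is induced by $s$. $\infty$-categories are modeled as quasi-categories (fibrant objects of the Joyal model structure). *)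

theory Defs
  imports "HOL-Homology.Homology"
begin

text \<open>A monotone map [m] -> [n] of the simplex category, given by its values on 0..m.\<close>
definition simplex_op :: "nat \<Rightarrow> nat \<Rightarrow> (nat \<Rightarrow> nat) \<Rightarrow> bool" where
  "simplex_op m n \<theta> \<equiv> (\<forall>i\<le>m. \<theta> i \<le> n) \<and> (\<forall>i j. i \<le> j \<and> j \<le> m \<longrightarrow> \<theta> i \<le> \<theta> j)"

text \<open>simp X n: the n-simplices; act X m n theta x: the simplicial operator theta^* applied
  to an n-simplex x, for theta : [m] -> [n].\<close>
record 'a sset =
  simp :: "nat \<Rightarrow> 'a set"
  act :: "nat \<Rightarrow> nat \<Rightarrow> (nat \<Rightarrow> nat) \<Rightarrow> 'a \<Rightarrow> 'a"

definition is_sset :: "'a sset \<Rightarrow> bool" where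
  "is_sset X \<equiv>
     (\<forall>m n \<theta> x. simplex_op m n \<theta> \<and> x \<in> simp X n \<longrightarrow> act X m n \<theta> x \<in> simp X m)
   \<and> (\<forall>n x. x \<in> simp X n \<longrightarrow> act X n n id x = x)
   \<and> (\<forall>k m n \<theta> \<psi> x. simplex_op m n \<theta> \<and> simplex_op k m \<psi> \<and> x \<in> simp X n \<longrightarrow>
          act X k n (\<theta> \<circ> \<psi>) x = act X k m \<psi> (act X m n \<theta> x))
   \<and> (\<forall>m n \<theta> \<theta>' x. (\<forall>i\<le>m. \<theta> i = \<theta>' i) \<longrightarrow> act X m n \<theta> x = act X m n \<theta>' x)"

definition smap :: "(nat \<Rightarrow> 'a \<Rightarrow> 'b) \<Rightarrow> 'a sset \<Rightarrow> 'b sset \<Rightarrow> bool" where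
  "smap f X Y \<equiv> (\<forall>n x. x \<in> simp X n \<longrightarrow> f n x \<in> simp Y n)
     \<and> (\<forall>m n \<theta> x. simplex_op m n \<theta> \<and> x \<in> simp X n \<longrightarrow>
           f m (act X m n \<theta> x) = act Y m n \<theta> (f n x))"

definition coface :: "nat \<Rightarrow> nat \<Rightarrow> nat" where
  "coface i j = (if j < i then j else Suc j)"

text \<open>Quasi-category: every inner horn Lambda^n_k -> X (0 < k < n), given as a compatible
  family of (n-1)-simplices y_i (i <> k), extends to an n-simplex.\<close>
definition quasi_category :: "'a sset \<Rightarrow> bool" where
  "quasi_category X \<equiv> is_sset X \<and>
    (\<forall>n k y. 0 < k \<and> k < n
       \<and> (\<forall>i\<le>n. i \<noteq> k \<longrightarrow> y i \<in> simp X (n - 1))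
       \<and> (\<forall>i j. i < j \<and> j \<le> n \<and> i \<noteq> k \<and> j \<noteq> k \<longrightarrow>
             act X (n - 2) (n - 1) (coface i) (y j) = act X (n - 2) (n - 1) (coface (j - 1)) (y i))
     \<longrightarrow> (\<exists>x\<in>simp X n. \<forall>i\<le>n. i \<noteq> k \<longrightarrow> act X (n - 1) n (coface i) x = y i))"

text \<open>Nerve of a poset (carrier P, order inherited from the type).\<close>
definition nerve :: "'p::order set \<Rightarrow> (nat \<Rightarrow> 'p) sset" where
  "nerve P = \<lparr> simp = (\<lambda>n. {c. (\<forall>i\<le>n. c i \<in> P) \<and> (\<forall>i j. i \<le> j \<and> j \<le> n \<longrightarrow> c i \<le> c j)
                                 \<and> (\<forall>i>n. c i = undefined)}),
              act = (\<lambda>m n \<theta> c. (\<lambda>i. if i \<le> m then c (\<theta> i) else undefined)) \<rparr>"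

definition simplex_op_map :: "nat \<Rightarrow> (nat \<Rightarrow> nat) \<Rightarrow> (nat \<Rightarrow> real) \<Rightarrow> (nat \<Rightarrow> real)" where
  "simplex_op_map m \<theta> = oriented_simplex m (\<lambda>j i. if i = \<theta> j then 1 else 0)"

definition Sing :: "'a topology \<Rightarrow> ((nat \<Rightarrow> real) \<Rightarrow> 'a) sset" where
  "Sing X = \<lparr> simp = (\<lambda>n. singular_simplex_set n X),
             act = (\<lambda>m n \<theta> \<sigma>. restrict (\<sigma> \<circ> simplex_op_map m \<theta>) (standard_simplex m)) \<rparr>"

definition alexandroff :: "'p::order set \<Rightarrow> 'p topology" where
  "alexandroff P = topology (\<lambda>U. U \<subseteq> P \<and> (\<forall>x\<in>U. \<forall>y\<in>P. x \<le> y \<longrightarrow> y \<in> U))"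

definition nerve_to_sing :: "nat \<Rightarrow> (nat \<Rightarrow> 'p) \<Rightarrow> (nat \<Rightarrow> real) \<Rightarrow> 'p" where
  "nerve_to_sing n c = restrict (\<lambda>t. c (Max {i. i \<le> n \<and> t i \<noteq> 0})) (standard_simplex n)"

definition pullback :: "'a sset \<Rightarrow> 'b sset \<Rightarrow> (nat \<Rightarrow> 'a \<Rightarrow> 'c) \<Rightarrow> (nat \<Rightarrow> 'b \<Rightarrow> 'c) \<Rightarrow> ('a \<times> 'b) sset" where
  "pullback A B f g = \<lparr> simp = (\<lambda>n. {(a, b). a \<in> simp A n \<and> b \<in> simp B n \<and> f n a = g n b}),
                        act = (\<lambda>m n \<theta> (a, b). (act A m n \<theta> a, act B m n \<theta> b)) \<rparr>"

definition Exit :: "'p::order set \<Rightarrow> ('x \<Rightarrow> 'p) \<Rightarrow> 'x topology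
                    \<Rightarrow> ((nat \<Rightarrow> 'p) \<times> ((nat \<Rightarrow> real) \<Rightarrow> 'x)) sset" where
  "Exit P s X = pullback (nerve P) (Sing X) nerve_to_sing (\<lambda>n \<sigma>. simplex_map n s \<sigma>)"

text \<open>Right morphism space Hom^R_C(x,y) (Lurie, HTT 1.2.2): its n-simplices are the
  (n+1)-simplices of C with last vertex y and whose face opposite the last vertex is the
  constant n-simplex at x.\<close>
definition homR :: "'a sset \<Rightarrow> 'a \<Rightarrow> 'a \<Rightarrow> 'a sset" where
  "homR C x y = \<lparr> simp = (\<lambda>n. {\<sigma> \<in> simp C (Suc n).
                           act C 0 (Suc n) (\<lambda>_. Suc n) \<sigma> = y
                         \<and> act C n (Suc n) id \<sigma> = act C n 0 (\<lambda>_. 0) x}),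
                  act = (\<lambda>m n \<theta> \<sigma>. act C (Suc m) (Suc n) (\<lambda>i. if i \<le> m then \<theta> i else Suc n) \<sigma>) \<rparr>"

definition prod_sset :: "'a sset \<Rightarrow> 'b sset \<Rightarrow> ('a \<times> 'b) sset" where
  "prod_sset A B = \<lparr> simp = (\<lambda>n. simp A n \<times> simp B n),
                     act = (\<lambda>m n \<theta> (a, b). (act A m n \<theta> a, act B m n \<theta> b)) \<rparr>"

definition Delta1 :: "(nat \<Rightarrow> nat) sset" where
  "Delta1 = nerve {0, 1}"

definition const_simplex :: "nat \<Rightarrow> nat \<Rightarrow> nat \<Rightarrow> nat" where
  "const_simplex n v = (\<lambda>i. if i \<le> n then v else undefined)"

definition shomotopic :: "'a sset \<Rightarrow> 'b sset \<Rightarrow> (nat \<Rightarrow> 'a \<Rightarrow> 'b) \<Rightarrow> (nat \<Rightarrow> 'a \<Rightarrow> 'b) \<Rightarrow> bool" where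
  "shomotopic K L \<phi> \<psi> \<equiv> (\<exists>h. smap h (prod_sset K Delta1) L \<and>
      (\<forall>n \<sigma>. \<sigma> \<in> simp K n \<longrightarrow> h n (\<sigma>, const_simplex n 0) = \<phi> n \<sigma> \<and> h n (\<sigma>, const_simplex n 1) = \<psi> n \<sigma>))"

definition shomotopy_equivalence :: "'a sset \<Rightarrow> 'b sset \<Rightarrow> (nat \<Rightarrow> 'a \<Rightarrow> 'b) \<Rightarrow> bool" where
  "shomotopy_equivalence K L f \<equiv> smap f K L \<and>
     (\<exists>g. smap g L K \<and> shomotopic K K (\<lambda>n x. g n (f n x)) (\<lambda>n x. x)
                     \<and> shomotopic L L (\<lambda>n x. f n (g n x)) (\<lambda>n x. x))"

definition fully_faithful :: "'a sset \<Rightarrow> 'b sset \<Rightarrow> (nat \<Rightarrow> 'a \<Rightarrow> 'b) \<Rightarrow> bool" where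
  "fully_faithful C D F \<equiv> quasi_category C \<and> quasi_category D \<and> smap F C D \<and>
     (\<forall>x\<in>simp C 0. \<forall>y\<in>simp C 0.
        shomotopy_equivalence (homR C x y) (homR D (F 0 x) (F 0 y)) (\<lambda>n \<sigma>. F (Suc n) \<sigma>))"

end

theory Submission
  imports Defs
begin

text \<open>A full simplicial subset of a quasi-category is again a quasi-category, and the inclusion
  has literally the same right morphism spaces: every vertex of an inner horn filler lies on one
  of the given faces, and every vertex of a simplex of \<open>Hom\<^sup>R(x, y)\<close> is \<open>x\<close> or \<open>y\<close>.
  \<open>Exit\<^sub>Q(Y)\<close> is the full simplicial subset of \<open>Exit\<^sub>P(X)\<close> spanned by the vertices lying
  over \<open>Q\<close>: a chain in \<open>Q\<close> together with a compatible singular simplex of \<open>X\<close> automatically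
  lands in \<open>Y = s\<^sup>-\<^sup>1(Q)\<close>.\<close>

definition sset_vertex :: "'a sset \<Rightarrow> nat \<Rightarrow> nat \<Rightarrow> 'a \<Rightarrow> 'a" where
  "sset_vertex X n i x = act X 0 n (\<lambda>_. i) x"

definition full_sub_sset :: "'a sset \<Rightarrow> 'a sset \<Rightarrow> bool" where
  "full_sub_sset C D \<longleftrightarrow> act C = act D \<and>
     (\<forall>n z. z \<in> simp C n \<longleftrightarrow> z \<in> simp D n \<and> (\<forall>i\<le>n. sset_vertex D n i z \<in> simp C 0))"

lemma act_closed:
  "is_sset X \<Longrightarrow> simplex_op m n \<theta> \<Longrightarrow> x \<in> simp X n \<Longrightarrow> act X m n \<theta> x \<in> simp X m"
  unfolding is_sset_def by blast

lemma act_id: "is_sset X \<Longrightarrow> x \<in> simp X n \<Longrightarrow> act X n n id x = x"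
  unfolding is_sset_def by blast

lemma act_comp:
  "is_sset X \<Longrightarrow> simplex_op m n \<theta> \<Longrightarrow> simplex_op k m \<psi> \<Longrightarrow> x \<in> simp X n \<Longrightarrow>
    act X k n (\<theta> \<circ> \<psi>) x = act X k m \<psi> (act X m n \<theta> x)"
  unfolding is_sset_def by blast

lemma act_cong:
  "is_sset X \<Longrightarrow> (\<And>i. i \<le> m \<Longrightarrow> \<theta> i = \<theta>' i) \<Longrightarrow> act X m n \<theta> x = act X m n \<theta>' x"
  unfolding is_sset_def by blast

lemma simplex_op_const: "i \<le> n \<Longrightarrow> simplex_op m n (\<lambda>_. i)"
  by (simp add: simplex_op_def)

lemma simplex_op_coface: "0 < n \<Longrightarrow> j \<le> n \<Longrightarrow> simplex_op (n - 1) n (coface j)"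
  by (auto simp: simplex_op_def coface_def)

lemma simplex_op_id: "m \<le> n \<Longrightarrow> simplex_op m n id"
  by (simp add: simplex_op_def)

lemma sset_vertex_act:
  assumes "is_sset X" "simplex_op m n \<theta>" "x \<in> simp X n" "i \<le> m"
  shows "sset_vertex X m i (act X m n \<theta> x) = sset_vertex X n (\<theta> i) x"
  using act_comp[OF assms(1,2) simplex_op_const[OF assms(4)] assms(3)]
  by (simp add: sset_vertex_def comp_def)

lemma sset_vertex_0: "is_sset X \<Longrightarrow> x \<in> simp X 0 \<Longrightarrow> sset_vertex X 0 0 x = x"
  unfolding sset_vertex_def using act_cong[of X 0 "\<lambda>_. 0" id] act_id by fastforce

lemma sset_vertex_in_simp:
  "is_sset X \<Longrightarrow> x \<in> simp X n \<Longrightarrow> i \<le> n \<Longrightarrow> sset_vertex X n i x \<in> simp X 0"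
  unfolding sset_vertex_def by (simp add: act_closed simplex_op_const)

lemma full_sub_sset_act: "full_sub_sset C D \<Longrightarrow> act C = act D"
  unfolding full_sub_sset_def by blast

lemma full_sub_sset_simp_subset:
  "full_sub_sset C D \<Longrightarrow> z \<in> simp C n \<Longrightarrow> z \<in> simp D n"
  unfolding full_sub_sset_def by blast

lemma full_sub_sset_vertex:
  "full_sub_sset C D \<Longrightarrow> z \<in> simp C n \<Longrightarrow> i \<le> n \<Longrightarrow> sset_vertex D n i z \<in> simp C 0"
  unfolding full_sub_sset_def by blast

lemma full_sub_sset_simpI:
  "full_sub_sset C D \<Longrightarrow> z \<in> simp D n \<Longrightarrow> (\<And>i. i \<le> n \<Longrightarrow> sset_vertex D n i z \<in> simp C 0)
    \<Longrightarrow> z \<in> simp C n"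
  unfolding full_sub_sset_def by blast

lemma is_sset_full_sub_sset:
  assumes D: "is_sset D" and CD: "full_sub_sset C D"
  shows "is_sset C"
proof -
  note act = full_sub_sset_act[OF CD]
  note sub = full_sub_sset_simp_subset[OF CD]
  have closed: "act D m n \<theta> x \<in> simp C m" if \<theta>: "simplex_op m n \<theta>" and x: "x \<in> simp C n" for m n \<theta> x
  proof -
    have "sset_vertex D m i (act D m n \<theta> x) \<in> simp C 0" if "i \<le> m" for i
      using sset_vertex_act[OF D \<theta> sub[OF x] that] full_sub_sset_vertex[OF CD x] \<theta> that
      by (simp add: simplex_op_def)
    with CD act_closed[OF D \<theta> sub[OF x]] show ?thesis by (rule full_sub_sset_simpI)
  qed
  show ?thesis
    unfolding is_sset_def act
    by (intro conjI allI impI) (auto intro: closed act_cong[OF D] simp: act_id[OF D] act_comp[OF D] sub)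
qed

lemma quasi_category_fill_horn:
  assumes "quasi_category X" "0 < k" "k < n"
    and "\<And>i. i \<le> n \<Longrightarrow> i \<noteq> k \<Longrightarrow> y i \<in> simp X (n - 1)"
    and "\<And>i j. i < j \<Longrightarrow> j \<le> n \<Longrightarrow> i \<noteq> k \<Longrightarrow> j \<noteq> k \<Longrightarrow>
           act X (n - 2) (n - 1) (coface i) (y j) = act X (n - 2) (n - 1) (coface (j - 1)) (y i)"
  obtains x where "x \<in> simp X n" "\<And>i. i \<le> n \<Longrightarrow> i \<noteq> k \<Longrightarrow> act X (n - 1) n (coface i) x = y i"
proof -
  from assms have "\<exists>x\<in>simp X n. \<forall>i\<le>n. i \<noteq> k \<longrightarrow> act X (n - 1) n (coface i) x = y i"
    unfolding quasi_category_def by blast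
  with that show ?thesis by blast
qed

lemma quasi_category_full_sub_sset:
  assumes D: "quasi_category D" and CD: "full_sub_sset C D"
  shows "quasi_category C"
  unfolding quasi_category_def
proof (intro conjI allI impI)
  have ssD: "is_sset D" using D by (simp add: quasi_category_def)
  then show "is_sset C" using CD by (rule is_sset_full_sub_sset)
  note act = full_sub_sset_act[OF CD]
  fix n k y
  assume horn: "0 < k \<and> k < n
       \<and> (\<forall>i\<le>n. i \<noteq> k \<longrightarrow> y i \<in> simp C (n - 1))
       \<and> (\<forall>i j. i < j \<and> j \<le> n \<and> i \<noteq> k \<and> j \<noteq> k \<longrightarrow>
             act C (n - 2) (n - 1) (coface i) (y j) = act C (n - 2) (n - 1) (coface (j - 1)) (y i))"
  then have k: "0 < k" "k < n" and yC: "\<And>i. i \<le> n \<Longrightarrow> i \<noteq> k \<Longrightarrow> y i \<in> simp C (n - 1)"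
    by auto
  obtain x where x: "x \<in> simp D n"
    and faces: "\<And>i. i \<le> n \<Longrightarrow> i \<noteq> k \<Longrightarrow> act D (n - 1) n (coface i) x = y i"
  proof (rule quasi_category_fill_horn[OF D k])
    show "y i \<in> simp D (n - 1)" if "i \<le> n" "i \<noteq> k" for i
      using full_sub_sset_simp_subset[OF CD yC[OF that]] .
  qed (use horn act in auto)
  have "sset_vertex D n i x \<in> simp C 0" if i: "i \<le> n" for i
  proof -
    \<comment> \<open>the vertex \<open>i\<close> lies on the face opposite \<open>0\<close>, or on the face opposite \<open>n\<close> if \<open>i = 0\<close>\<close>
    obtain j i' where j: "j \<le> n" "j \<noteq> k" and i': "i' \<le> n - 1" "coface j i' = i"
    proof (cases "i = 0")
      case True
      then show ?thesis using that[of n 0] k by (simp add: coface_def)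
    next
      case False
      then show ?thesis using that[of 0 "i - 1"] k i by (simp add: coface_def)
    qed
    have "sset_vertex D n i x = sset_vertex D (n - 1) i' (y j)"
      using sset_vertex_act[OF ssD simplex_op_coface[OF _ j(1)] x i'(1)] k faces[OF j] i'(2)
      by simp
    then show ?thesis using full_sub_sset_vertex[OF CD yC[OF j] i'(1)] by simp
  qed
  with CD x have "x \<in> simp C n" by (rule full_sub_sset_simpI)
  then show "\<exists>x\<in>simp C n. \<forall>i\<le>n. i \<noteq> k \<longrightarrow> act C (n - 1) n (coface i) x = y i"
    using faces act by auto
qed

lemma homR_full_sub_sset:
  assumes D: "is_sset D" and CD: "full_sub_sset C D"
    and x: "x \<in> simp C 0" and y: "y \<in> simp C 0"
  shows "homR C x y = homR D x y"
proof -
  note act = full_sub_sset_act[OF CD]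
  have xD: "x \<in> simp D 0" using x CD by (rule full_sub_sset_simp_subset[rotated])
  have "\<sigma> \<in> simp C (Suc n)"
    if \<sigma>: "\<sigma> \<in> simp D (Suc n)"
      and last: "act D 0 (Suc n) (\<lambda>_. Suc n) \<sigma> = y"
      and base: "act D n (Suc n) id \<sigma> = act D n 0 (\<lambda>_. 0) x" for n \<sigma>
  proof -
    have "sset_vertex D (Suc n) i \<sigma> \<in> {x, y}" if i: "i \<le> Suc n" for i
    proof (cases "i = Suc n")
      case False
      then have "i \<le> n" using i by simp
      then have "sset_vertex D (Suc n) i \<sigma> = sset_vertex D n i (act D n 0 (\<lambda>_. 0) x)"
        using sset_vertex_act[OF D simplex_op_id[of n "Suc n"] \<sigma>] base by simp
      also have "\<dots> = sset_vertex D 0 0 x"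
        using sset_vertex_act[OF D simplex_op_const[of 0 0 n] xD \<open>i \<le> n\<close>] by simp
      finally show ?thesis using sset_vertex_0[OF D xD] by simp
    qed (use last in \<open>simp add: sset_vertex_def\<close>)
    with CD \<sigma> show ?thesis using x y by (blast intro: full_sub_sset_simpI)
  qed
  then have "simp (homR C x y) n = simp (homR D x y) n" for n
    unfolding homR_def act using full_sub_sset_simp_subset[OF CD] by auto
  then show ?thesis unfolding homR_def act by auto
qed

lemma shomotopic_refl: "shomotopic K K (\<lambda>n x. x) (\<lambda>n x. x)"
  unfolding shomotopic_def
  by (rule exI[of _ "\<lambda>n z. fst z"]) (auto simp: smap_def prod_sset_def split: prod.splits)

lemma shomotopy_equivalence_id: "shomotopy_equivalence K K (\<lambda>n x. x)"
  unfolding shomotopy_equivalence_def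
  by (intro conjI exI[of _ "\<lambda>n x. x"]) (auto simp: smap_def shomotopic_refl)

lemma fully_faithful_full_sub_sset:
  assumes D: "quasi_category D" and CD: "full_sub_sset C D"
  shows "fully_faithful C D (\<lambda>n z. z)"
proof -
  have "is_sset D" using D by (simp add: quasi_category_def)
  moreover have "smap (\<lambda>n z. z) C D"
    using full_sub_sset_simp_subset[OF CD] full_sub_sset_act[OF CD] by (simp add: smap_def)
  ultimately show ?thesis
    unfolding fully_faithful_def
    using D quasi_category_full_sub_sset[OF D CD] homR_full_sub_sset[OF _ CD]
    by (simp add: shomotopy_equivalence_id)
qed

lemma nerve_to_sing_vertex:
  assumes "t \<in> standard_simplex n"
  shows "\<exists>i\<le>n. nerve_to_sing n c t = c i"
proof -
  have "{i. i \<le> n \<and> t i \<noteq> 0} \<noteq> {}"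
  proof
    assume "{i. i \<le> n \<and> t i \<noteq> 0} = {}"
    then have "(\<Sum>i\<le>n. t i) = 0" by auto
    with assms show False by (simp add: standard_simplex_def)
  qed
  then have "Max {i. i \<le> n \<and> t i \<noteq> 0} \<le> n" by simp
  with assms show ?thesis by (auto simp: nerve_to_sing_def)
qed

lemma simp_Exit:
  "simp (Exit P s X) n = {(c, \<tau>). c \<in> simp (nerve P) n \<and> singular_simplex n X \<tau>
      \<and> nerve_to_sing n c = simplex_map n s \<tau>}"
  by (simp add: Exit_def pullback_def Sing_def)

lemma act_Exit: "act (Exit P s X) = act (Exit Q s Y)"
  by (simp add: Exit_def pullback_def nerve_def Sing_def)

lemma fst_act_Exit:
  "fst (act (Exit P s X) m n \<theta> z) = (\<lambda>i. if i \<le> m then fst z (\<theta> i) else undefined)"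
  by (simp add: Exit_def pullback_def nerve_def case_prod_beta)

lemma simp_Exit_preimage:
  assumes "Q \<subseteq> P"
  shows "z \<in> simp (Exit Q s (subtopology X (topspace X \<inter> s -` Q))) n \<longleftrightarrow>
         z \<in> simp (Exit P s X) n \<and> (\<forall>i\<le>n. fst z i \<in> Q)"
proof (cases z)
  case (Pair c \<tau>)
  have "\<tau> ` standard_simplex n \<subseteq> s -` Q"
    if "nerve_to_sing n c = simplex_map n s \<tau>" "\<forall>i\<le>n. c i \<in> Q"
  proof
    fix x assume "x \<in> \<tau> ` standard_simplex n"
    then obtain t where t: "t \<in> standard_simplex n" "x = \<tau> t" by blast
    with that nerve_to_sing_vertex[OF t(1), of c] show "x \<in> s -` Q"
      by (fastforce simp: simplex_map_def dest: fun_cong[of _ _ t])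
  qed
  moreover have "singular_simplex n X \<tau> \<Longrightarrow> \<tau> ` standard_simplex n \<subseteq> topspace X"
    by (auto simp: singular_simplex_def continuous_map_def)
  ultimately show ?thesis
    using assms by (auto simp: Pair simp_Exit singular_simplex_subtopology nerve_def)
qed

lemma full_sub_sset_Exit_preimage:
  assumes QP: "Q \<subseteq> P" and D: "is_sset (Exit P s X)"
  shows "full_sub_sset (Exit Q s (subtopology X (topspace X \<inter> s -` Q))) (Exit P s X)"
  unfolding full_sub_sset_def
proof (intro conjI allI)
  show "act (Exit Q s (subtopology X (topspace X \<inter> s -` Q))) = act (Exit P s X)"
    by (rule act_Exit)
  fix n z
  have "sset_vertex (Exit P s X) n i z \<in> simp (Exit Q s (subtopology X (topspace X \<inter> s -` Q))) 0
      \<longleftrightarrow> fst z i \<in> Q" if "z \<in> simp (Exit P s X) n" "i \<le> n" for i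
  proof -
    have "sset_vertex (Exit P s X) n i z \<in> simp (Exit P s X) 0"
      using D that by (rule sset_vertex_in_simp)
    moreover have "fst (sset_vertex (Exit P s X) n i z) 0 = fst z i"
      by (simp add: sset_vertex_def fst_act_Exit)
    ultimately show ?thesis
      using simp_Exit_preimage[OF QP, where z = "sset_vertex (Exit P s X) n i z" and n = 0]
      by simp
  qed
  then show "z \<in> simp (Exit Q s (subtopology X (topspace X \<inter> s -` Q))) n \<longleftrightarrow>
      z \<in> simp (Exit P s X) n \<and>
      (\<forall>i\<le>n. sset_vertex (Exit P s X) n i z \<in> simp (Exit Q s (subtopology X (topspace X \<inter> s -` Q))) 0)"
    using simp_Exit_preimage[OF QP, where z = z and n = n] by blast
qed

theorem lemma2p5:
  fixes X :: "'x topology" and s :: "'x \<Rightarrow> 'p::order" and P Q :: "'p set"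
  assumes strat_X: "continuous_map X (alexandroff P) s"
    and QP: "Q \<subseteq> P"
    and convex: "\<And>a b c. a \<in> Q \<Longrightarrow> b \<in> P \<Longrightarrow> c \<in> Q \<Longrightarrow> a \<le> b \<Longrightarrow> b \<le> c \<Longrightarrow> b \<in> Q"
    and strat_Y: "continuous_map (subtopology X (topspace X \<inter> s -` Q)) (alexandroff Q) s"
    and qcat: "quasi_category (Exit P s X)"
  shows "quasi_category (Exit Q s (subtopology X (topspace X \<inter> s -` Q)))
       \<and> fully_faithful (Exit Q s (subtopology X (topspace X \<inter> s -` Q))) (Exit P s X) (\<lambda>n z. z)"
proof -
  have "is_sset (Exit P s X)" using qcat by (simp add: quasi_category_def)
  with QP have full: "full_sub_sset (Exit Q s (subtopology X (topspace X \<inter> s -` Q))) (Exit P s X)"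
    by (rule full_sub_sset_Exit_preimage)
  show ?thesis
    using quasi_category_full_sub_sset[OF qcat full] fully_faithful_full_sub_sset[OF qcat full]
    by simp
qed

end
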